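(* Let $\Theta$ and $U$ be compact metric spaces, $\rho:\Theta\to L_1(\mathcal{H})$ a quantum statistical model, and $f:\Theta\times U\to[0,\infty)$ continuous. Put $\kappa_u(\theta):=f(\theta,u)\rho(\theta)$. Then for every $\epsilon>0$ and every compact $K\subseteq\Theta$ there exist a trace-class operator $W$ and $\delta>0$ such that $$-W\le\kappa_u(\theta)-\kappa_u(\eta)\le W\quad\text{for all }(\theta,\eta)\in K_\delta\text{ and all }u\in U,$$ and $\mathrm{Tr}\,W\le\epsilon$.
   Context: $\mathcal{H}$ is a Hilbert space, $L_1(\mathcal{H})$ its trace-class operators; for self-adjoint operators $A\ge B$ means $A-B$ is positive. With $d$ the metric on $\Theta$, for compact $K\subseteq\Theta$ and $\delta>0$ let $K_\delta:=\{(\theta,\eta)\in K\times K: d(\theta,\eta)<\delta\}$. For $T:\Theta\to L_1(\mathcal{H})$ with self-adjoint values, $\omega_T(K_\delta):=\inf\{\|X\|_1: X\in L_1(\mathcal{H}),\ -X\le T(\theta)-T(\eta)\le X\ \forall(\theta,\eta)\in K_\delta\}$, and $T$ is regular if $\lim_{\delta\to0}\omega_T(K_\delta)=0$ for every compact $K$. A quantum statistical model is a map $\rho:\Theta\to L_1(\mathcal{H})$ with $\rho(\theta)\ge0$, $\mathrm{Tr}\,\rho(\theta)=1$, which is injective and regular. *)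

theory Defs
  imports "HOL-Analysis.Analysis"
begin

text \<open>The Hilbert space H is modelled concretely as l2(I) for an index type 'i
  (every Hilbert space is unitarily isomorphic to some l2(I)).  Vectors are
  functions 'i => complex; operators are maps on such functions, of which only the
  restriction to l2 vectors matters.\<close>

definition l2_vec :: "('i \<Rightarrow> complex) \<Rightarrow> bool" where
  "l2_vec v \<longleftrightarrow> (\<lambda>i. (cmod (v i))^2) summable_on UNIV"

definition l2_inner :: "('i \<Rightarrow> complex) \<Rightarrow> ('i \<Rightarrow> complex) \<Rightarrow> complex" where
  "l2_inner v w = infsum (\<lambda>i. cnj (v i) * w i) UNIV"

definition l2_norm :: "('i \<Rightarrow> complex) \<Rightarrow> real" where
  "l2_norm v = sqrt (infsum (\<lambda>i. (cmod (v i))^2) UNIV)"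

type_synonym 'i op = "('i \<Rightarrow> complex) \<Rightarrow> ('i \<Rightarrow> complex)"

definition bounded_op :: "'i op \<Rightarrow> bool" where
  "bounded_op T \<longleftrightarrow>
     (\<forall>v. l2_vec v \<longrightarrow> l2_vec (T v)) \<and>
     (\<forall>v w a b. l2_vec v \<longrightarrow> l2_vec w \<longrightarrow>
        T (\<lambda>i. a * v i + b * w i) = (\<lambda>i. a * T v i + b * T w i)) \<and>
     (\<exists>C. \<forall>v. l2_vec v \<longrightarrow> l2_norm (T v) \<le> C * l2_norm v)"

definition op_minus :: "'i op \<Rightarrow> 'i op \<Rightarrow> 'i op" where
  "op_minus A B = (\<lambda>v i. A v i - B v i)"

definition op_uminus :: "'i op \<Rightarrow> 'i op" where
  "op_uminus A = (\<lambda>v i. - A v i)"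

definition op_scale :: "real \<Rightarrow> 'i op \<Rightarrow> 'i op" where
  "op_scale c A = (\<lambda>v i. complex_of_real c * A v i)"

text \<open>Positive (bounded) operator: <v, T v> is real and nonnegative
  (on a complex Hilbert space this entails self-adjointness).\<close>
definition positive_op :: "'i op \<Rightarrow> bool" where
  "positive_op T \<longleftrightarrow> bounded_op T \<and>
     (\<forall>v. l2_vec v \<longrightarrow> l2_inner v (T v) \<in> \<real> \<and> 0 \<le> Re (l2_inner v (T v)))"

definition op_le :: "'i op \<Rightarrow> 'i op \<Rightarrow> bool" where
  "op_le A B \<longleftrightarrow> positive_op (op_minus B A)"

definition orthonormal_on :: "nat set \<Rightarrow> (nat \<Rightarrow> 'i \<Rightarrow> complex) \<Rightarrow> bool" where
  "orthonormal_on F e \<longleftrightarrow> (\<forall>k\<in>F. l2_vec (e k)) \<and>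
     (\<forall>k\<in>F. \<forall>l\<in>F. l2_inner (e k) (e l) = (if k = l then 1 else 0))"

text \<open>Trace norm: ||T||_1 = sup over orthonormal families (e_k), (f_k) of
  sum_k |<f_k, T e_k>| (finite families suffice for the supremum).\<close>
definition tn_sums :: "'i op \<Rightarrow> real set" where
  "tn_sums T = {\<Sum>k\<in>F. cmod (l2_inner (f k) (T (e k))) | F e f.
                 finite F \<and> orthonormal_on F e \<and> orthonormal_on F f}"

definition trace_class :: "'i op \<Rightarrow> bool" where
  "trace_class T \<longleftrightarrow> bounded_op T \<and> bdd_above (tn_sums T)"

definition trace_norm :: "'i op \<Rightarrow> real" where
  "trace_norm T = Sup (tn_sums T)"

definition ket :: "'i \<Rightarrow> 'i \<Rightarrow> complex" where
  "ket i = (\<lambda>j. if j = i then 1 else 0)"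

definition trace :: "'i op \<Rightarrow> complex" where
  "trace T = infsum (\<lambda>i. l2_inner (ket i) (T (ket i))) UNIV"

definition Kdelta :: "'a::metric_space set \<Rightarrow> real \<Rightarrow> ('a \<times> 'a) set" where
  "Kdelta K \<delta> = {(\<theta>, \<eta>). \<theta> \<in> K \<and> \<eta> \<in> K \<and> dist \<theta> \<eta> < \<delta>}"

text \<open>omega_T(K_delta); the infimum of the empty set is +infinity.\<close>
definition omega :: "('a::metric_space \<Rightarrow> 'i op) \<Rightarrow> 'a set \<Rightarrow> real \<Rightarrow> ereal" where
  "omega T K \<delta> = Inf ((\<lambda>X. ereal (trace_norm X)) `
     {X. trace_class X \<and>
         (\<forall>(\<theta>, \<eta>) \<in> Kdelta K \<delta>.
            op_le (op_uminus X) (op_minus (T \<theta>) (T \<eta>)) \<and>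
            op_le (op_minus (T \<theta>) (T \<eta>)) X)})"

definition regular :: "'a::metric_space set \<Rightarrow> ('a \<Rightarrow> 'i op) \<Rightarrow> bool" where
  "regular \<Theta> T \<longleftrightarrow> (\<forall>K. K \<subseteq> \<Theta> \<longrightarrow> compact K \<longrightarrow>
      ((\<lambda>\<delta>. omega T K \<delta>) \<longlongrightarrow> 0) (at_right 0))"

definition quantum_statistical_model :: "'a::metric_space set \<Rightarrow> ('a \<Rightarrow> 'i op) \<Rightarrow> bool" where
  "quantum_statistical_model \<Theta> \<rho> \<longleftrightarrow>
     (\<forall>\<theta>\<in>\<Theta>. trace_class (\<rho> \<theta>) \<and> positive_op (\<rho> \<theta>) \<and> trace (\<rho> \<theta>) = 1) \<and>
     (\<forall>\<theta>\<in>\<Theta>. \<forall>\<eta>\<in>\<Theta>. \<theta> \<noteq> \<eta> \<longrightarrow> (\<exists>v. l2_vec v \<and> \<rho> \<theta> v \<noteq> \<rho> \<eta> v)) \<and>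
     regular \<Theta> \<rho>"

end

theory Submission
  imports Defs
begin

text \<open>Regularity of \<rho> gives, for small d, a trace-class X of small trace norm with
  -X \<le> \<rho>(\<theta>) - \<rho>(\<eta>) \<le> X whenever \<theta>, \<eta> \<in> K and dist \<theta> \<eta> < d. Split
  f(\<theta>,u)\<rho>(\<theta>) - f(\<eta>,u)\<rho>(\<eta>) = f(\<theta>,u)(\<rho>(\<theta>) - \<rho>(\<eta>)) + (f(\<theta>,u) - f(\<eta>,u))\<rho>(\<eta>).
  The first term lies between -M X and M X, where M bounds f. By uniform continuity of f on
  the compact set \<Theta> \<times> U the coefficient of the second is at most \<gamma> in absolute value for
  \<theta> close to \<eta>, uniformly in u, and \<rho>(\<eta>) \<le> \<rho>(c) + X \<le> S + X, where c is the point of a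
  finite d-net C of K near \<eta> and S is the sum of the states \<rho>(c) over C.
  Hence W = (M + \<gamma>) X + \<gamma> S works, and Tr W \<le> (M + \<gamma>) ||X||_1 + \<gamma> |C| is small
  once X and then \<gamma> are chosen small.\<close>

lemma norm_lincomb_power2_le:
  fixes a b x y :: "'a::real_normed_div_algebra"
  shows "(norm (a * x + b * y))\<^sup>2 \<le> 2 * (norm a)\<^sup>2 * (norm x)\<^sup>2 + 2 * (norm b)\<^sup>2 * (norm y)\<^sup>2"
proof -
  have "norm (a * x + b * y) \<le> norm a * norm x + norm b * norm y"
    by (metis norm_mult norm_triangle_ineq)
  then have "(norm (a * x + b * y))\<^sup>2 \<le> (norm a * norm x + norm b * norm y)\<^sup>2"
    by (simp add: power_mono)
  also have "\<dots> \<le> 2 * (norm a * norm x)\<^sup>2 + 2 * (norm b * norm y)\<^sup>2"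
    using sum_squares_bound[of "norm a * norm x" "norm b * norm y"] by (simp add: power2_sum)
  finally show ?thesis
    by (simp add: power_mult_distrib)
qed

lemma l2_vec_lincomb:
  assumes "l2_vec v" "l2_vec w"
  shows "l2_vec (\<lambda>i. a * v i + b * w i)"
proof -
  have "(\<lambda>i. 2 * (cmod a)\<^sup>2 * (cmod (v i))\<^sup>2 + 2 * (cmod b)\<^sup>2 * (cmod (w i))\<^sup>2) summable_on UNIV"
    using assms unfolding l2_vec_def by (intro summable_on_add summable_on_cmult_right) auto
  then show ?thesis
    unfolding l2_vec_def by (rule summable_on_comparison_test) (auto intro: norm_lincomb_power2_le)
qed

lemma l2_vec_ket: "l2_vec (ket i)"
  unfolding l2_vec_def
  by (rule finite_nonzero_values_imp_summable_on, rule finite_subset[of _ "{i}"]) (auto simp: ket_def)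

lemma ket_apply: "ket i j = (if j = i then 1 else 0)"
  by (simp add: ket_def)

lemma l2_inner_summable:
  assumes "l2_vec v" "l2_vec w"
  shows "(\<lambda>i. cnj (v i) * w i) summable_on UNIV"
proof -
  have "(\<lambda>i. (cmod (v i))\<^sup>2 + (cmod (w i))\<^sup>2) summable_on UNIV"
    using assms unfolding l2_vec_def by (intro summable_on_add) auto
  then have "(\<lambda>i. norm (cnj (v i) * w i)) summable_on UNIV"
  proof (rule summable_on_comparison_test)
    fix i
    have "cmod (v i) * cmod (w i) \<le> (cmod (v i))\<^sup>2 + (cmod (w i))\<^sup>2"
      using sum_squares_bound[of "cmod (v i)" "cmod (w i)", unfolded mult.assoc]
        mult_nonneg_nonneg[OF norm_ge_zero norm_ge_zero, of "v i" "w i"]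
      by linarith
    then show "norm (cnj (v i) * w i) \<le> (cmod (v i))\<^sup>2 + (cmod (w i))\<^sup>2"
      by (simp add: norm_mult)
  qed simp
  then show ?thesis
    by (rule abs_summable_summable)
qed

lemma l2_inner_lincomb:
  assumes "l2_vec v" "l2_vec w" "l2_vec w'"
  shows "l2_inner v (\<lambda>i. a * w i + b * w' i) = a * l2_inner v w + b * l2_inner v w'"
proof -
  have "(\<lambda>i. cnj (v i) * (a * w i + b * w' i)) = (\<lambda>i. a * (cnj (v i) * w i) + b * (cnj (v i) * w' i))"
    by (auto simp: algebra_simps)
  then show ?thesis
    unfolding l2_inner_def
    using l2_inner_summable[OF assms(1,2)] l2_inner_summable[OF assms(1,3)]
    by (simp add: infsum_add summable_on_cmult_right infsum_cmult_right)
qed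

lemma l2_inner_ket: "l2_inner (ket i) w = w i"
proof -
  have "l2_inner (ket i) w = (\<Sum>\<^sub>\<infinity>j\<in>{i}. cnj (ket i j) * w j)"
    unfolding l2_inner_def by (rule infsum_cong_neutral) (auto simp: ket_apply)
  then show ?thesis
    by (simp add: ket_apply)
qed

lemma l2_norm_nonneg: "0 \<le> l2_norm v"
  unfolding l2_norm_def by (simp add: infsum_nonneg)

lemma l2_norm_power2: "(l2_norm v)\<^sup>2 = (\<Sum>\<^sub>\<infinity>i. (cmod (v i))\<^sup>2)"
  unfolding l2_norm_def by (simp add: infsum_nonneg)

lemma l2_norm_lincomb_le:
  assumes "l2_vec v" "l2_vec w"
  shows "l2_norm (\<lambda>i. a * v i + b * w i) \<le> 2 * (cmod a * l2_norm v + cmod b * l2_norm w)"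
proof (rule power2_le_imp_le)
  have "(l2_norm (\<lambda>i. a * v i + b * w i))\<^sup>2 = (\<Sum>\<^sub>\<infinity>i. (cmod (a * v i + b * w i))\<^sup>2)"
    by (rule l2_norm_power2)
  also have "\<dots> \<le> (\<Sum>\<^sub>\<infinity>i. 2 * (cmod a)\<^sup>2 * (cmod (v i))\<^sup>2 + 2 * (cmod b)\<^sup>2 * (cmod (w i))\<^sup>2)"
    using assms l2_vec_lincomb[OF assms, of a b] unfolding l2_vec_def
    by (intro infsum_mono summable_on_add summable_on_cmult_right) (auto intro: norm_lincomb_power2_le)
  also have "\<dots> = 2 * (cmod a)\<^sup>2 * (l2_norm v)\<^sup>2 + 2 * (cmod b)\<^sup>2 * (l2_norm w)\<^sup>2"
    using assms unfolding l2_vec_def l2_norm_power2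
    by (simp add: infsum_add summable_on_cmult_right infsum_cmult_right)
  also have "\<dots> \<le> (2 * (cmod a * l2_norm v + cmod b * l2_norm w))\<^sup>2"
    using l2_norm_nonneg[of v] l2_norm_nonneg[of w] by (simp add: power2_eq_square algebra_simps)
  finally show "(l2_norm (\<lambda>i. a * v i + b * w i))\<^sup>2 \<le> (2 * (cmod a * l2_norm v + cmod b * l2_norm w))\<^sup>2" .
  show "0 \<le> 2 * (cmod a * l2_norm v + cmod b * l2_norm w)"
    using l2_norm_nonneg[of v] l2_norm_nonneg[of w] by simp
qed

definition op_lincomb :: "complex \<Rightarrow> 'i op \<Rightarrow> complex \<Rightarrow> 'i op \<Rightarrow> 'i op" where
  "op_lincomb a A b B = (\<lambda>v i. a * A v i + b * B v i)"

definition zero_op :: "'i op" where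
  "zero_op = (\<lambda>v i. 0)"

definition qform :: "'i op \<Rightarrow> ('i \<Rightarrow> complex) \<Rightarrow> complex" where
  "qform A v = l2_inner v (A v)"

definition op_dominated :: "'i op \<Rightarrow> 'i op \<Rightarrow> bool" where
  "op_dominated D W \<longleftrightarrow> op_le (op_uminus W) D \<and> op_le D W"

lemma op_minus_eq_lincomb: "op_minus A B = op_lincomb 1 A (-1) B"
  unfolding op_minus_def op_lincomb_def by simp

lemma op_uminus_eq_lincomb: "op_uminus A = op_lincomb (-1) A 0 A"
  unfolding op_uminus_def op_lincomb_def by simp

lemma op_scale_eq_lincomb: "op_scale c A = op_lincomb (of_real c) A 0 A"
  unfolding op_scale_def op_lincomb_def by simp

lemma bounded_op_l2_vec: "bounded_op A \<Longrightarrow> l2_vec v \<Longrightarrow> l2_vec (A v)"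
  unfolding bounded_op_def by blast

lemma bounded_op_linear:
  assumes "bounded_op T" "l2_vec v" "l2_vec w"
  shows "T (\<lambda>i. c * v i + d * w i) = (\<lambda>i. c * T v i + d * T w i)"
  using assms by (simp add: bounded_op_def)

lemma bounded_op_lincomb [simp]:
  assumes "bounded_op A" "bounded_op B"
  shows "bounded_op (op_lincomb a A b B)"
proof -
  obtain CA where CA: "\<And>v. l2_vec v \<Longrightarrow> l2_norm (A v) \<le> CA * l2_norm v"
    using assms(1) unfolding bounded_op_def by blast
  obtain CB where CB: "\<And>v. l2_vec v \<Longrightarrow> l2_norm (B v) \<le> CB * l2_norm v"
    using assms(2) unfolding bounded_op_def by blast
  have "l2_vec (op_lincomb a A b B v)" if "l2_vec v" for v
    unfolding op_lincomb_def using assms that by (simp add: l2_vec_lincomb bounded_op_l2_vec)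
  moreover have "op_lincomb a A b B (\<lambda>i. c * v i + d * w i) =
      (\<lambda>i. c * op_lincomb a A b B v i + d * op_lincomb a A b B w i)"
    if "l2_vec v" "l2_vec w" for v w c d
    unfolding op_lincomb_def using bounded_op_linear[OF assms(1) that] bounded_op_linear[OF assms(2) that]
    by (simp add: algebra_simps)
  moreover have "l2_norm (op_lincomb a A b B v) \<le> (2 * (cmod a * CA + cmod b * CB)) * l2_norm v"
    if v: "l2_vec v" for v
  proof -
    have "l2_norm (op_lincomb a A b B v) \<le> 2 * (cmod a * l2_norm (A v) + cmod b * l2_norm (B v))"
      unfolding op_lincomb_def using assms v by (intro l2_norm_lincomb_le; simp add: bounded_op_l2_vec)
    also have "\<dots> \<le> 2 * (cmod a * (CA * l2_norm v) + cmod b * (CB * l2_norm v))"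
      using CA[OF v] CB[OF v] by (intro mult_left_mono add_mono) auto
    finally show ?thesis
      by (simp add: algebra_simps)
  qed
  ultimately show ?thesis
    unfolding bounded_op_def by blast
qed

lemma l2_inner_op_lincomb:
  assumes "l2_vec v" "l2_vec w" "bounded_op A" "bounded_op B"
  shows "l2_inner v (op_lincomb a A b B w) = a * l2_inner v (A w) + b * l2_inner v (B w)"
  unfolding op_lincomb_def using assms by (simp add: l2_inner_lincomb bounded_op_l2_vec)

lemma qform_op_lincomb [simp]:
  "l2_vec v \<Longrightarrow> bounded_op A \<Longrightarrow> bounded_op B \<Longrightarrow>
    qform (op_lincomb a A b B) v = a * qform A v + b * qform B v"
  unfolding qform_def by (rule l2_inner_op_lincomb)

lemma bounded_op_op_minus [simp]: "bounded_op A \<Longrightarrow> bounded_op B \<Longrightarrow> bounded_op (op_minus A B)"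
  unfolding op_minus_eq_lincomb by simp

lemma bounded_op_op_uminus [simp]: "bounded_op A \<Longrightarrow> bounded_op (op_uminus A)"
  unfolding op_uminus_eq_lincomb by simp

lemma bounded_op_op_scale [simp]: "bounded_op A \<Longrightarrow> bounded_op (op_scale c A)"
  unfolding op_scale_eq_lincomb by simp

lemma qform_op_minus [simp]:
  "l2_vec v \<Longrightarrow> bounded_op A \<Longrightarrow> bounded_op B \<Longrightarrow> qform (op_minus A B) v = qform A v - qform B v"
  unfolding op_minus_eq_lincomb by simp

lemma qform_op_uminus [simp]: "l2_vec v \<Longrightarrow> bounded_op A \<Longrightarrow> qform (op_uminus A) v = - qform A v"
  unfolding op_uminus_eq_lincomb by simp

lemma qform_op_scale [simp]: "l2_vec v \<Longrightarrow> bounded_op A \<Longrightarrow> qform (op_scale c A) v = of_real c * qform A v"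
  unfolding op_scale_eq_lincomb by simp

lemma qform_ket: "qform A (ket i) = A (ket i) i"
  unfolding qform_def by (rule l2_inner_ket)

lemma op_le_iff_qform:
  assumes "bounded_op A" "bounded_op B"
  shows "op_le A B \<longleftrightarrow>
    (\<forall>v. l2_vec v \<longrightarrow> Im (qform A v) = Im (qform B v) \<and> Re (qform A v) \<le> Re (qform B v))"
  using assms unfolding op_le_def positive_op_def qform_def[symmetric]
  by (auto simp: complex_is_Real_iff)

lemma positive_op_iff_qform:
  "positive_op A \<longleftrightarrow> bounded_op A \<and> (\<forall>v. l2_vec v \<longrightarrow> Im (qform A v) = 0 \<and> 0 \<le> Re (qform A v))"
  unfolding positive_op_def qform_def complex_is_Real_iff ..

lemma op_le_qformD:
  assumes "op_le A B" "bounded_op A" "bounded_op B" "l2_vec v"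
  shows "Im (qform A v) = Im (qform B v)" "Re (qform A v) \<le> Re (qform B v)"
  using assms(1) unfolding op_le_iff_qform[OF assms(2,3)] using assms(4) by blast+

lemma op_dominated_iff_qform:
  assumes "bounded_op D" "bounded_op W"
  shows "op_dominated D W \<longleftrightarrow> (\<forall>v. l2_vec v \<longrightarrow>
    Im (qform D v) = 0 \<and> Im (qform W v) = 0 \<and> \<bar>Re (qform D v)\<bar> \<le> Re (qform W v))"
  using assms unfolding op_dominated_def by (auto simp: op_le_iff_qform abs_le_iff)

lemma op_dominated_qformD:
  assumes "op_dominated D W" "bounded_op D" "bounded_op W" "l2_vec v"
  shows "Im (qform D v) = 0" "Im (qform W v) = 0" "\<bar>Re (qform D v)\<bar> \<le> Re (qform W v)"
  using assms(1) unfolding op_dominated_iff_qform[OF assms(2,3)] using assms(4) by blast+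

lemma positive_op_if_op_le_diff_self:
  assumes "bounded_op A" "bounded_op X" "op_le (op_minus A A) X"
  shows "positive_op X"
  using assms unfolding positive_op_iff_qform by (auto simp: op_le_iff_qform)

lemma trace_class_op_lincomb:
  assumes "trace_class A" "trace_class B"
  shows "trace_class (op_lincomb a A b B)"
proof -
  have bounded: "bounded_op A" "bounded_op B"
    using assms unfolding trace_class_def by auto
  have "s \<le> cmod a * trace_norm A + cmod b * trace_norm B"
    if s_mem: "s \<in> tn_sums (op_lincomb a A b B)" for s
  proof -
    obtain F e f where s: "s = (\<Sum>k\<in>F. cmod (l2_inner (f k) (op_lincomb a A b B (e k))))"
      and F: "finite F" "orthonormal_on F e" "orthonormal_on F f"
      using s_mem unfolding tn_sums_def by blast
    have tn_bound: "(\<Sum>k\<in>F. cmod (l2_inner (f k) (T (e k)))) \<le> trace_norm T"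
      if "trace_class T" for T :: "'a op"
      using F that unfolding trace_class_def trace_norm_def by (auto intro!: cSup_upper simp: tn_sums_def)
    have "s = (\<Sum>k\<in>F. cmod (a * l2_inner (f k) (A (e k)) + b * l2_inner (f k) (B (e k))))"
      unfolding s using F bounded unfolding orthonormal_on_def
      by (intro sum.cong refl) (simp add: l2_inner_op_lincomb)
    also have "\<dots> \<le> (\<Sum>k\<in>F. cmod a * cmod (l2_inner (f k) (A (e k))) + cmod b * cmod (l2_inner (f k) (B (e k))))"
      by (intro sum_mono) (metis norm_mult norm_triangle_ineq)
    also have "\<dots> = cmod a * (\<Sum>k\<in>F. cmod (l2_inner (f k) (A (e k)))) + cmod b * (\<Sum>k\<in>F. cmod (l2_inner (f k) (B (e k))))"
      by (simp add: sum.distrib sum_distrib_left)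
    also have "\<dots> \<le> cmod a * trace_norm A + cmod b * trace_norm B"
      using tn_bound assms by (intro add_mono mult_left_mono) auto
    finally show ?thesis .
  qed
  then have "bdd_above (tn_sums (op_lincomb a A b B))"
    by (rule bdd_aboveI)
  with bounded show ?thesis
    unfolding trace_class_def by (intro conjI bounded_op_lincomb)
qed

lemma bounded_op_zero_op: "bounded_op zero_op"
  unfolding bounded_op_def zero_op_def by (auto simp: l2_vec_def l2_norm_def intro: exI[of _ 0])

lemma qform_zero_op: "qform zero_op v = 0"
  unfolding qform_def zero_op_def l2_inner_def by simp

lemma trace_class_zero_op: "trace_class zero_op"
proof -
  have "tn_sums zero_op \<subseteq> {0}"
    unfolding tn_sums_def zero_op_def l2_inner_def by auto
  then have "bdd_above (tn_sums zero_op)"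
    by (rule bdd_above_mono[rotated]) simp
  with bounded_op_zero_op show ?thesis
    unfolding trace_class_def by simp
qed

lemma trace_zero_op: "trace zero_op = 0"
  unfolding trace_def zero_op_def l2_inner_def by simp

lemma sum_diag_in_tn_sums:
  assumes "finite F"
  shows "(\<Sum>i\<in>F. cmod (T (ket i) i)) \<in> tn_sums T"
proof -
  obtain h where h: "bij_betw h {0..<card F} F"
    using ex_bij_betw_nat_finite[OF assms] by blast
  have "orthonormal_on {0..<card F} (\<lambda>k. ket (h k))"
    using bij_betw_imp_inj_on[OF h] unfolding orthonormal_on_def
    by (auto simp: l2_vec_ket l2_inner_ket ket_apply inj_on_eq_iff)
  moreover have "(\<Sum>i\<in>F. cmod (T (ket i) i)) =
      (\<Sum>k\<in>{0..<card F}. cmod (l2_inner (ket (h k)) (T (ket (h k)))))"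
    using sum.reindex_bij_betw[OF h, of "\<lambda>i. cmod (T (ket i) i)"] by (simp add: l2_inner_ket)
  ultimately show ?thesis
    unfolding tn_sums_def
    by (intro CollectI exI[of _ "{0..<card F}"] exI[of _ "\<lambda>k. ket (h k)"]) simp
qed

lemma trace_eq_infsum_diag: "trace A = (\<Sum>\<^sub>\<infinity>i. A (ket i) i)"
  unfolding trace_def by (simp add: l2_inner_ket)

lemma trace_op_lincomb:
  assumes "(\<lambda>i. A (ket i) i) summable_on UNIV" "(\<lambda>i. B (ket i) i) summable_on UNIV"
  shows "trace (op_lincomb a A b B) = a * trace A + b * trace B"
  unfolding trace_eq_infsum_diag op_lincomb_def using assms
  by (simp add: infsum_add summable_on_cmult_right infsum_cmult_right)

lemma trace_positive_op:
  assumes "trace_class X" "positive_op X"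
  shows "(\<lambda>i. X (ket i) i) summable_on UNIV" "trace X \<in> \<real>"
    "0 \<le> Re (trace X)" "Re (trace X) \<le> trace_norm X"
proof -
  define g where "g i = Re (X (ket i) i)" for i
  have diag: "X (ket i) i = of_real (g i)" and g_nonneg: "0 \<le> g i" for i
  proof -
    have "Im (qform X (ket i)) = 0 \<and> 0 \<le> Re (qform X (ket i))"
      using assms(2) l2_vec_ket[of i] unfolding positive_op_iff_qform by simp
    then show "X (ket i) i = of_real (g i)" "0 \<le> g i"
      unfolding qform_ket g_def by (simp_all add: complex_eq_iff)
  qed
  have partial_sums: "sum g F \<le> trace_norm X" if "finite F" for F
  proof -
    have "sum g F = (\<Sum>i\<in>F. cmod (X (ket i) i))"
      using g_nonneg by (simp add: diag)
    also have "\<dots> \<le> trace_norm X"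
      using assms(1) sum_diag_in_tn_sums[OF that] unfolding trace_class_def trace_norm_def
      by (auto intro: cSup_upper)
    finally show ?thesis .
  qed
  have "g summable_on UNIV"
    using g_nonneg partial_sums by (auto intro!: nonneg_bdd_above_summable_on bdd_aboveI2)
  then have "((\<lambda>i. X (ket i) i) has_sum of_real (\<Sum>\<^sub>\<infinity>i. g i)) UNIV"
    unfolding diag by (intro has_sum_of_real has_sum_infsum)
  then have trace: "trace X = of_real (\<Sum>\<^sub>\<infinity>i. g i)" and "(\<lambda>i. X (ket i) i) summable_on UNIV"
    unfolding trace_eq_infsum_diag summable_on_def by (auto intro: infsumI)
  then show "(\<lambda>i. X (ket i) i) summable_on UNIV" "trace X \<in> \<real>"
    by simp_all
  show "0 \<le> Re (trace X)"
    unfolding trace using g_nonneg by (simp add: infsum_nonneg)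
  show "Re (trace X) \<le> trace_norm X"
    unfolding trace using \<open>g summable_on UNIV\<close> partial_sums by (simp add: infsum_le_finite_sums)
qed

lemma states_sum_majorant:
  assumes "finite C" "\<And>c. c \<in> C \<Longrightarrow> trace_class (\<rho> c) \<and> positive_op (\<rho> c) \<and> trace (\<rho> c) = 1"
  shows "\<exists>S. trace_class S \<and> positive_op S \<and> trace S = of_nat (card C) \<and> (\<forall>c\<in>C. op_le (\<rho> c) S)"
  using assms
proof (induction C rule: finite_induct)
  case empty
  show ?case
    by (intro exI[of _ zero_op])
      (simp add: trace_class_zero_op trace_zero_op positive_op_iff_qform bounded_op_zero_op qform_zero_op)
next
  case (insert \<eta> C)
  then obtain S where S: "trace_class S" "positive_op S" "trace S = of_nat (card C)" "\<forall>c\<in>C. op_le (\<rho> c) S"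
    by auto
  have \<rho>\<eta>: "trace_class (\<rho> \<eta>)" "positive_op (\<rho> \<eta>)" "trace (\<rho> \<eta>) = 1"
    using insert.prems by auto
  have bounded: "bounded_op S" "\<And>c. c \<in> insert \<eta> C \<Longrightarrow> bounded_op (\<rho> c)"
    using S(1) insert.prems unfolding trace_class_def by auto
  define S' where "S' = op_lincomb 1 (\<rho> \<eta>) 1 S"
  have "bounded_op S'"
    unfolding S'_def using bounded by simp
  have "trace_class S'"
    unfolding S'_def using \<rho>\<eta>(1) S(1) by (rule trace_class_op_lincomb)
  moreover have "positive_op S'"
    using \<rho>\<eta>(2) S(2) unfolding S'_def positive_op_iff_qform by auto
  moreover have "trace S' = of_nat (card (insert \<eta> C))"
    using trace_op_lincomb[of "\<rho> \<eta>" S, OF trace_positive_op(1)[OF \<rho>\<eta>(1,2)] trace_positive_op(1)[OF S(1,2)]]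
      \<rho>\<eta>(3) S(3) insert.hyps unfolding S'_def by simp
  moreover have "op_le (\<rho> c) S'" if c: "c \<in> insert \<eta> C" for c
    unfolding op_le_iff_qform[OF bounded(2)[OF c] \<open>bounded_op S'\<close>]
  proof (intro allI impI)
    fix v :: "'b \<Rightarrow> complex" assume v: "l2_vec v"
    have "Im (qform (\<rho> \<eta>) v) = 0" "0 \<le> Re (qform (\<rho> \<eta>) v)" "Im (qform S v) = 0" "0 \<le> Re (qform S v)"
      using \<rho>\<eta>(2) S(2) v unfolding positive_op_iff_qform by blast+
    moreover have "Im (qform (\<rho> c) v) = Im (qform S v) \<and> Re (qform (\<rho> c) v) \<le> Re (qform S v)" if "c \<in> C"
      using op_le_qformD[OF S(4)[rule_format, OF that] bounded(2)[OF c] bounded(1) v] by simp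
    ultimately show "Im (qform (\<rho> c) v) = Im (qform S' v) \<and> Re (qform (\<rho> c) v) \<le> Re (qform S' v)"
      using c v bounded unfolding S'_def by auto
  qed
  ultimately show ?case
    by blast
qed

lemma abs_weighted_diff_le:
  fixes s t M g a b x \<sigma> :: real
  assumes "0 \<le> s" "s \<le> M" "\<bar>s - t\<bar> \<le> g" "0 \<le> b" "\<bar>a - b\<bar> \<le> x" "b \<le> \<sigma> + x"
  shows "\<bar>s * a - t * b\<bar> \<le> (M + g) * x + g * \<sigma>"
proof -
  have "\<bar>s * a - t * b\<bar> = \<bar>s * (a - b) + (s - t) * b\<bar>"
    by (simp add: algebra_simps)
  also have "\<dots> \<le> \<bar>s\<bar> * \<bar>a - b\<bar> + \<bar>s - t\<bar> * b"
    using abs_triangle_ineq[of "s * (a - b)" "(s - t) * b"] assms(4) by (simp add: abs_mult)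
  also have "\<dots> \<le> M * x + g * (\<sigma> + x)"
    using assms by (intro add_mono mult_mono) auto
  finally show ?thesis
    by (simp add: algebra_simps)
qed

lemma op_dominated_weighted_diff:
  assumes "positive_op A" "positive_op B" "bounded_op C" "bounded_op X" "bounded_op S"
    and "op_dominated (op_minus A B) X" "op_dominated (op_minus C B) X" "op_le C S"
    and "0 \<le> s" "s \<le> M" "\<bar>s - t\<bar> \<le> g"
  shows "op_dominated (op_minus (op_scale s A) (op_scale t B)) (op_lincomb (of_real (M + g)) X (of_real g) S)"
proof -
  have bounded: "bounded_op A" "bounded_op B" "bounded_op C" "bounded_op X" "bounded_op S"
    using assms(1-5) unfolding positive_op_def by auto
  have "Im (qform A v) = 0 \<and> Im (qform B v) = 0 \<and> Im (qform X v) = 0 \<and> Im (qform S v) = 0 \<and>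
      \<bar>s * Re (qform A v) - t * Re (qform B v)\<bar> \<le> (M + g) * Re (qform X v) + g * Re (qform S v)"
    if v: "l2_vec v" for v
  proof -
    have A: "Im (qform A v) = 0" and B: "Im (qform B v) = 0" "0 \<le> Re (qform B v)"
      using assms(1,2) v unfolding positive_op_iff_qform by blast+
    have AB: "Im (qform X v) = 0" "\<bar>Re (qform A v) - Re (qform B v)\<bar> \<le> Re (qform X v)"
      using op_dominated_qformD[OF assms(6) bounded_op_op_minus[OF bounded(1,2)] bounded(4) v] v bounded
      by simp_all
    have CB: "Im (qform C v) = 0" "Re (qform B v) - Re (qform C v) \<le> Re (qform X v)"
      using op_dominated_qformD[OF assms(7) bounded_op_op_minus[OF bounded(3,2)] bounded(4) v] v bounded B(1)
      by (simp_all add: abs_le_iff)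
    have CS: "Im (qform C v) = Im (qform S v)" "Re (qform C v) \<le> Re (qform S v)"
      using op_le_qformD[OF assms(8) bounded(3,5) v] .
    have "\<bar>s * Re (qform A v) - t * Re (qform B v)\<bar> \<le> (M + g) * Re (qform X v) + g * Re (qform S v)"
      using AB(2) B(2) CB(2) CS(2) by (intro abs_weighted_diff_le[OF assms(9-11)]) auto
    with A B AB CB CS show ?thesis
      by simp
  qed
  then show ?thesis
    using bounded by (simp add: op_dominated_iff_qform)
qed

lemma regular_dominating_op:
  assumes "regular \<Theta> \<rho>" "K \<subseteq> \<Theta>" "compact K" "0 < \<tau>"
  obtains d X where "0 < d" "trace_class X" "trace_norm X < \<tau>"
    "\<And>\<theta> \<eta>. (\<theta>, \<eta>) \<in> Kdelta K d \<Longrightarrow> op_dominated (op_minus (\<rho> \<theta>) (\<rho> \<eta>)) X"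
proof -
  have "((\<lambda>d. omega \<rho> K d) \<longlongrightarrow> 0) (at_right 0)"
    using assms(1-3) unfolding regular_def by blast
  then have "eventually (\<lambda>d. omega \<rho> K d < ereal \<tau>) (at_right 0)"
    using assms(4) by (simp add: order_tendstoD(2))
  then have "eventually (\<lambda>d. 0 < d \<and> omega \<rho> K d < ereal \<tau>) (at_right 0)"
    by (simp add: eventually_conj_iff eventually_at_right_less)
  then obtain d where "0 < d" "omega \<rho> K d < ereal \<tau>"
    using eventually_happens'[of "at_right (0::real)"] by auto
  moreover obtain X where "trace_class X" "trace_norm X < \<tau>"
    and "\<forall>(\<theta>, \<eta>)\<in>Kdelta K d. op_le (op_uminus X) (op_minus (\<rho> \<theta>) (\<rho> \<eta>)) \<and> op_le (op_minus (\<rho> \<theta>) (\<rho> \<eta>)) X"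
    using \<open>omega \<rho> K d < ereal \<tau>\<close> unfolding omega_def Inf_less_iff by auto
  ultimately show ?thesis
    using that[of d X] unfolding op_dominated_def by blast
qed

lemma continuous_on_Times_uniform_in_snd:
  fixes f :: "'a::metric_space \<times> 'b::metric_space \<Rightarrow> 'c::metric_space"
  assumes "compact \<Theta>" "compact U" "continuous_on (\<Theta> \<times> U) f" "0 < \<gamma>"
  obtains \<delta> where "0 < \<delta>"
    "\<And>\<theta> \<eta> u. \<theta> \<in> \<Theta> \<Longrightarrow> \<eta> \<in> \<Theta> \<Longrightarrow> u \<in> U \<Longrightarrow> dist \<theta> \<eta> < \<delta> \<Longrightarrow> dist (f (\<theta>, u)) (f (\<eta>, u)) < \<gamma>"
proof -
  have "uniformly_continuous_on (\<Theta> \<times> U) f"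
    using assms(1-3) by (intro compact_uniformly_continuous compact_Times)
  then obtain \<delta> where "0 < \<delta>"
    and "\<forall>x\<in>\<Theta> \<times> U. \<forall>x'\<in>\<Theta> \<times> U. dist x' x < \<delta> \<longrightarrow> dist (f x') (f x) < \<gamma>"
    using assms(4) unfolding uniformly_continuous_on_def by blast
  then show ?thesis
    using that by (auto simp: dist_Pair_Pair)
qed

lemma compact_continuous_nonneg_upper_bound:
  fixes f :: "'a::topological_space \<Rightarrow> real"
  assumes "compact S" "continuous_on S f"
  obtains M where "0 \<le> M" "\<And>x. x \<in> S \<Longrightarrow> f x \<le> M"
proof -
  have "bounded (f ` S)"
    using assms by (intro compact_imp_bounded compact_continuous_image)
  then obtain a where a: "\<And>x. x \<in> S \<Longrightarrow> \<bar>f x\<bar> \<le> a"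
    unfolding bounded_real by auto
  show ?thesis
  proof (rule that[of "max 0 a"])
    show "f x \<le> max 0 a" if "x \<in> S" for x
      using a[OF that] by (simp add: abs_le_iff)
  qed simp
qed

lemma states_net_majorant:
  assumes "compact K" "0 < d" "\<And>\<theta>. \<theta> \<in> K \<Longrightarrow> trace_class (\<rho> \<theta>) \<and> positive_op (\<rho> \<theta>) \<and> trace (\<rho> \<theta>) = 1"
  obtains S n where "trace_class S" "positive_op S" "trace S = of_nat n"
    "\<And>\<eta>. \<eta> \<in> K \<Longrightarrow> \<exists>c\<in>K. dist c \<eta> < d \<and> op_le (\<rho> c) S"
proof -
  obtain C where C: "finite C" "C \<subseteq> K" "K \<subseteq> (\<Union>c\<in>C. ball c d)"
    by (rule compactE_image[OF assms(1), of K "\<lambda>c. ball c d"]) (use assms(2) that in auto)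
  obtain S where S: "trace_class S" "positive_op S" "trace S = of_nat (card C)" "\<forall>c\<in>C. op_le (\<rho> c) S"
    using states_sum_majorant[OF C(1), of \<rho>] assms(3) C(2) by blast
  show ?thesis
  proof (rule that[OF S(1-3)])
    fix \<eta> assume "\<eta> \<in> K"
    then obtain c where "c \<in> C" "dist c \<eta> < d"
      using C(3) by (auto simp: mem_ball)
    then show "\<exists>c\<in>K. dist c \<eta> < d \<and> op_le (\<rho> c) S"
      using C(2) S(4) by blast
  qed
qed

lemma op_dominated_weighted_states:
  fixes \<rho> :: "'a::metric_space \<Rightarrow> 'i op" and f :: "'a \<times> 'b \<Rightarrow> real"
  assumes states: "\<And>\<theta>. \<theta> \<in> K \<Longrightarrow> positive_op (\<rho> \<theta>)"
    and X: "\<And>\<theta> \<eta>. (\<theta>, \<eta>) \<in> Kdelta K d \<Longrightarrow> op_dominated (op_minus (\<rho> \<theta>) (\<rho> \<eta>)) X" "bounded_op X"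
    and net: "\<And>\<eta>. \<eta> \<in> K \<Longrightarrow> \<exists>c\<in>K. dist c \<eta> < d \<and> op_le (\<rho> c) S" "bounded_op S"
    and f_bounds: "\<And>\<theta> u. \<theta> \<in> K \<Longrightarrow> u \<in> U \<Longrightarrow> 0 \<le> f (\<theta>, u) \<and> f (\<theta>, u) \<le> M"
    and f_close: "\<And>\<theta> \<eta> u. \<theta> \<in> K \<Longrightarrow> \<eta> \<in> K \<Longrightarrow> u \<in> U \<Longrightarrow> dist \<theta> \<eta> < \<delta> \<Longrightarrow>
      \<bar>f (\<theta>, u) - f (\<eta>, u)\<bar> \<le> \<gamma>"
    and "(\<theta>, \<eta>) \<in> Kdelta K (min d \<delta>)" "u \<in> U"
  shows "op_dominated (op_minus (op_scale (f (\<theta>, u)) (\<rho> \<theta>)) (op_scale (f (\<eta>, u)) (\<rho> \<eta>)))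
    (op_lincomb (of_real (M + \<gamma>)) X (of_real \<gamma>) S)"
proof -
  have "\<theta> \<in> K" "\<eta> \<in> K" "(\<theta>, \<eta>) \<in> Kdelta K d" "dist \<theta> \<eta> < \<delta>"
    using assms(8) unfolding Kdelta_def by auto
  obtain c where "c \<in> K" "dist c \<eta> < d" "op_le (\<rho> c) S"
    using net(1) \<open>\<eta> \<in> K\<close> by blast
  show ?thesis
  proof (rule op_dominated_weighted_diff)
    show "positive_op (\<rho> \<theta>)" "positive_op (\<rho> \<eta>)"
      using states \<open>\<theta> \<in> K\<close> \<open>\<eta> \<in> K\<close> by blast+
    show "bounded_op (\<rho> c)"
      using states[OF \<open>c \<in> K\<close>] unfolding positive_op_def by blast
    show "op_dominated (op_minus (\<rho> \<theta>) (\<rho> \<eta>)) X"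
      using X(1) \<open>(\<theta>, \<eta>) \<in> Kdelta K d\<close> .
    show "op_dominated (op_minus (\<rho> c) (\<rho> \<eta>)) X"
      using X(1) \<open>c \<in> K\<close> \<open>\<eta> \<in> K\<close> \<open>dist c \<eta> < d\<close> unfolding Kdelta_def by simp
    show "0 \<le> f (\<theta>, u)" "f (\<theta>, u) \<le> M"
      using f_bounds \<open>\<theta> \<in> K\<close> \<open>u \<in> U\<close> by blast+
    show "\<bar>f (\<theta>, u) - f (\<eta>, u)\<bar> \<le> \<gamma>"
      using f_close \<open>\<theta> \<in> K\<close> \<open>\<eta> \<in> K\<close> \<open>u \<in> U\<close> \<open>dist \<theta> \<eta> < \<delta>\<close> by blast
  qed (use X(2) net(2) \<open>op_le (\<rho> c) S\<close> in auto)
qed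

lemma op_dominated_weighted_states_uniformly:
  fixes \<rho> :: "'a::metric_space \<Rightarrow> 'i op" and f :: "'a \<times> 'b::metric_space \<Rightarrow> real"
  assumes "compact \<Theta>" "compact U" "continuous_on (\<Theta> \<times> U) f"
    and f_nonneg: "\<forall>x\<in>\<Theta> \<times> U. 0 \<le> f x" and f_le: "\<And>x. x \<in> \<Theta> \<times> U \<Longrightarrow> f x \<le> M"
    and "K \<subseteq> \<Theta>" "\<And>\<theta>. \<theta> \<in> K \<Longrightarrow> positive_op (\<rho> \<theta>)"
    and X: "\<And>\<theta> \<eta>. (\<theta>, \<eta>) \<in> Kdelta K d \<Longrightarrow> op_dominated (op_minus (\<rho> \<theta>) (\<rho> \<eta>)) X" "bounded_op X"
    and net: "\<And>\<eta>. \<eta> \<in> K \<Longrightarrow> \<exists>c\<in>K. dist c \<eta> < d \<and> op_le (\<rho> c) S" "bounded_op S"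
    and "0 < d" "0 < \<gamma>"
  obtains \<delta> where "0 < \<delta>" "\<And>\<theta> \<eta> u. (\<theta>, \<eta>) \<in> Kdelta K \<delta> \<Longrightarrow> u \<in> U \<Longrightarrow>
    op_dominated (op_minus (op_scale (f (\<theta>, u)) (\<rho> \<theta>)) (op_scale (f (\<eta>, u)) (\<rho> \<eta>)))
      (op_lincomb (of_real (M + \<gamma>)) X (of_real \<gamma>) S)"
proof -
  obtain \<delta> where "0 < \<delta>" and \<delta>: "\<And>\<theta> \<eta> u. \<theta> \<in> \<Theta> \<Longrightarrow> \<eta> \<in> \<Theta> \<Longrightarrow> u \<in> U \<Longrightarrow>
      dist \<theta> \<eta> < \<delta> \<Longrightarrow> dist (f (\<theta>, u)) (f (\<eta>, u)) < \<gamma>"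
    using continuous_on_Times_uniform_in_snd[OF assms(1-3) \<open>0 < \<gamma>\<close>] by blast
  have f_close: "\<bar>f (\<theta>, u) - f (\<eta>, u)\<bar> \<le> \<gamma>"
    if "\<theta> \<in> K" "\<eta> \<in> K" "u \<in> U" "dist \<theta> \<eta> < \<delta>" for \<theta> \<eta> u
    using \<delta>[of \<theta> \<eta> u] that subsetD[OF \<open>K \<subseteq> \<Theta>\<close>] by (simp add: dist_real_def)
  have f_bounds: "0 \<le> f (\<theta>, u) \<and> f (\<theta>, u) \<le> M" if "\<theta> \<in> K" "u \<in> U" for \<theta> u
    using f_nonneg f_le \<open>K \<subseteq> \<Theta>\<close> that by blast
  show ?thesis
  proof (rule that)
    show "0 < min d \<delta>"
      using \<open>0 < d\<close> \<open>0 < \<delta>\<close> by simp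
    fix \<theta> \<eta> u assume "(\<theta>, \<eta>) \<in> Kdelta K (min d \<delta>)" "u \<in> U"
    then show "op_dominated (op_minus (op_scale (f (\<theta>, u)) (\<rho> \<theta>)) (op_scale (f (\<eta>, u)) (\<rho> \<eta>)))
      (op_lincomb (of_real (M + \<gamma>)) X (of_real \<gamma>) S)"
      using assms(7) X net f_bounds f_close
      by (intro op_dominated_weighted_states[where \<rho> = \<rho> and f = f]) auto
  qed
qed

lemma trace_weighted_majorant:
  assumes "trace_class X" "positive_op X" "trace_class S" "positive_op S" "trace S = of_nat n"
    and "0 \<le> M" "0 \<le> \<gamma>" "\<gamma> \<le> 1"
  shows "trace (op_lincomb (of_real (M + \<gamma>)) X (of_real \<gamma>) S) \<in> \<real>"
    "Re (trace (op_lincomb (of_real (M + \<gamma>)) X (of_real \<gamma>) S)) \<le> (M + 1) * trace_norm X + \<gamma> * real n"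
proof -
  note trX = trace_positive_op[OF assms(1,2)]
  have "trace (op_lincomb (of_real (M + \<gamma>)) X (of_real \<gamma>) S) = of_real (M + \<gamma>) * trace X + of_real (\<gamma> * real n)"
    using trace_op_lincomb[of X S, OF trX(1) trace_positive_op(1)[OF assms(3,4)]] assms(5) by simp
  moreover have "(M + \<gamma>) * Re (trace X) \<le> (M + 1) * trace_norm X"
    using trX(3,4) assms(6-8) by (intro mult_mono) auto
  ultimately show "trace (op_lincomb (of_real (M + \<gamma>)) X (of_real \<gamma>) S) \<in> \<real>"
    "Re (trace (op_lincomb (of_real (M + \<gamma>)) X (of_real \<gamma>) S)) \<le> (M + 1) * trace_norm X + \<gamma> * real n"
    using trX(2) by (auto simp: complex_is_Real_iff)
qed

lemma weighted_states_dominated: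
  fixes \<rho> :: "'a::metric_space \<Rightarrow> 'i op" and f :: "'a \<times> 'b::metric_space \<Rightarrow> real"
  assumes "compact \<Theta>" "compact U" "continuous_on (\<Theta> \<times> U) f"
    and "\<forall>x\<in>\<Theta> \<times> U. 0 \<le> f x" "\<And>x. x \<in> \<Theta> \<times> U \<Longrightarrow> f x \<le> M" "0 \<le> M"
    and states: "\<And>\<theta>. \<theta> \<in> \<Theta> \<Longrightarrow> trace_class (\<rho> \<theta>) \<and> positive_op (\<rho> \<theta>) \<and> trace (\<rho> \<theta>) = 1"
    and "K \<subseteq> \<Theta>" "compact K" "K \<noteq> {}" "0 < d" "trace_class X"
    and X: "\<And>\<theta> \<eta>. (\<theta>, \<eta>) \<in> Kdelta K d \<Longrightarrow> op_dominated (op_minus (\<rho> \<theta>) (\<rho> \<eta>)) X"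
    and "0 < \<epsilon>"
  shows "\<exists>W \<delta>. trace_class W \<and> 0 < \<delta> \<and>
    (\<forall>(\<theta>, \<eta>)\<in>Kdelta K \<delta>. \<forall>u\<in>U.
      op_dominated (op_minus (op_scale (f (\<theta>, u)) (\<rho> \<theta>)) (op_scale (f (\<eta>, u)) (\<rho> \<eta>))) W) \<and>
    trace W \<in> \<real> \<and> Re (trace W) \<le> (M + 1) * trace_norm X + \<epsilon>"
proof -
  have states_K: "\<And>\<theta>. \<theta> \<in> K \<Longrightarrow> trace_class (\<rho> \<theta>) \<and> positive_op (\<rho> \<theta>) \<and> trace (\<rho> \<theta>) = 1"
    using states \<open>K \<subseteq> \<Theta>\<close> by blast
  have "bounded_op X"
    using \<open>trace_class X\<close> unfolding trace_class_def by blast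
  obtain \<theta>\<^sub>0 where "\<theta>\<^sub>0 \<in> K"
    using \<open>K \<noteq> {}\<close> by blast
  then have "positive_op X"
    using X[of \<theta>\<^sub>0 \<theta>\<^sub>0] states_K[of \<theta>\<^sub>0] \<open>0 < d\<close> \<open>bounded_op X\<close>
    by (intro positive_op_if_op_le_diff_self[of "\<rho> \<theta>\<^sub>0"]) (auto simp: Kdelta_def op_dominated_def positive_op_def)
  obtain S n where S: "trace_class S" "positive_op S" "trace S = of_nat n"
    and net: "\<And>\<eta>. \<eta> \<in> K \<Longrightarrow> \<exists>c\<in>K. dist c \<eta> < d \<and> op_le (\<rho> c) S"
    using states_net_majorant[where \<rho> = \<rho>, OF \<open>compact K\<close> \<open>0 < d\<close> states_K] by blast
  define \<gamma> where "\<gamma> = min 1 (\<epsilon> / (real n + 1))"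
  have "0 < \<gamma>" "\<gamma> \<le> 1"
    unfolding \<gamma>_def using \<open>0 < \<epsilon>\<close> by auto
  have "\<gamma> * real n \<le> \<epsilon> / (real n + 1) * real n"
    unfolding \<gamma>_def by (intro mult_right_mono) auto
  also have "\<dots> \<le> \<epsilon>"
    using \<open>0 < \<epsilon>\<close> by (simp add: field_simps)
  finally have "\<gamma> * real n \<le> \<epsilon>" .
  have "bounded_op S"
    using S(2) unfolding positive_op_def by blast
  then obtain \<delta> where "0 < \<delta>" and dominated: "\<And>\<theta> \<eta> u. (\<theta>, \<eta>) \<in> Kdelta K \<delta> \<Longrightarrow> u \<in> U \<Longrightarrow>
    op_dominated (op_minus (op_scale (f (\<theta>, u)) (\<rho> \<theta>)) (op_scale (f (\<eta>, u)) (\<rho> \<eta>)))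
      (op_lincomb (of_real (M + \<gamma>)) X (of_real \<gamma>) S)"
    using op_dominated_weighted_states_uniformly[where \<rho> = \<rho>, OF assms(1-5,8) _ X \<open>bounded_op X\<close> net
        \<open>bounded_op S\<close> \<open>0 < d\<close> \<open>0 < \<gamma>\<close>] states_K by blast
  show ?thesis
    using trace_weighted_majorant[OF \<open>trace_class X\<close> \<open>positive_op X\<close> S \<open>0 \<le> M\<close> _ \<open>\<gamma> \<le> 1\<close>]
      trace_class_op_lincomb[OF \<open>trace_class X\<close> S(1)] \<open>0 < \<gamma>\<close> \<open>0 < \<delta>\<close> dominated \<open>\<gamma> * real n \<le> \<epsilon>\<close>
    by (intro exI[of _ "op_lincomb (of_real (M + \<gamma>)) X (of_real \<gamma>) S"] exI[of _ \<delta>]) fastforce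
qed

theorem lemma4:
  fixes \<Theta> :: "'a::metric_space set" and U :: "'b::metric_space set"
    and \<rho> :: "'a \<Rightarrow> 'i op" and f :: "'a \<times> 'b \<Rightarrow> real"
    and \<epsilon> :: real and K :: "'a set"
  assumes "compact \<Theta>" and "compact U"
    and "quantum_statistical_model \<Theta> \<rho>"
    and "continuous_on (\<Theta> \<times> U) f" and "\<forall>x\<in>\<Theta> \<times> U. 0 \<le> f x"
    and "\<epsilon> > 0" and "K \<subseteq> \<Theta>" and "compact K"
  shows "\<exists>W \<delta>. trace_class W \<and> \<delta> > 0 \<and>
    (\<forall>(\<theta>, \<eta>) \<in> Kdelta K \<delta>. \<forall>u\<in>U.
        op_le (op_uminus W) (op_minus (op_scale (f (\<theta>, u)) (\<rho> \<theta>)) (op_scale (f (\<eta>, u)) (\<rho> \<eta>))) \<and>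
        op_le (op_minus (op_scale (f (\<theta>, u)) (\<rho> \<theta>)) (op_scale (f (\<eta>, u)) (\<rho> \<eta>))) W) \<and>
    trace W \<in> \<real> \<and> Re (trace W) \<le> \<epsilon>"
proof (cases "K = {}")
  case True
  then have "Kdelta K 1 = {}"
    unfolding Kdelta_def by simp
  with assms(6) show ?thesis
    by (intro exI[of _ zero_op] exI[of _ "1::real"]) (simp add: trace_class_zero_op trace_zero_op)
next
  case False
  have states: "\<And>\<theta>. \<theta> \<in> \<Theta> \<Longrightarrow> trace_class (\<rho> \<theta>) \<and> positive_op (\<rho> \<theta>) \<and> trace (\<rho> \<theta>) = 1"
    using conjunct1[OF assms(3)[unfolded quantum_statistical_model_def]] by blast
  have "regular \<Theta> \<rho>"
    using assms(3) unfolding quantum_statistical_model_def by (elim conjE)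
  obtain M where "0 \<le> M" and f_le: "\<And>x. x \<in> \<Theta> \<times> U \<Longrightarrow> f x \<le> M"
    using compact_continuous_nonneg_upper_bound[OF compact_Times[OF assms(1,2)] assms(4)] by blast
  define \<tau> where "\<tau> = \<epsilon> / (2 * (M + 1))"
  have "0 < \<tau>"
    unfolding \<tau>_def using assms(6) \<open>0 \<le> M\<close> by simp
  then obtain d X where "0 < d" "trace_class X" "trace_norm X < \<tau>"
    and X: "\<And>\<theta> \<eta>. (\<theta>, \<eta>) \<in> Kdelta K d \<Longrightarrow> op_dominated (op_minus (\<rho> \<theta>) (\<rho> \<eta>)) X"
    using regular_dominating_op[OF \<open>regular \<Theta> \<rho>\<close> assms(7,8)] by blast
  moreover have "(M + 1) * trace_norm X \<le> \<epsilon> / 2"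
    using \<open>trace_norm X < \<tau>\<close> \<open>0 \<le> M\<close> unfolding \<tau>_def by (simp add: field_simps)
  ultimately show ?thesis
    using weighted_states_dominated[where \<rho> = \<rho> and \<epsilon> = "\<epsilon> / 2",
        OF assms(1,2,4,5) f_le \<open>0 \<le> M\<close> states assms(7,8) False \<open>0 < d\<close> \<open>trace_class X\<close> X] assms(6)
    unfolding op_dominated_def by fastforce
qed

end
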